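(* Let $(M,S)$ be a spin$^c$ pair in standard form, with diagonal blocks of degrees $k,l,r$ ($k+l=|S|$, $n=k+l+r$), and let $k+l<m\le n$. Then there is $a\in\{2,3\}$ such that the $m$-th row of $M$ has the form $M_m=[\,a,\dots,a,\ \bar a,\dots,\bar a,\ *\,]$ (first $k$ entries equal to $a$, next $l$ entries equal to $\bar a$), and $k\cdot a+l\cdot\bar a+(k-l-1)\cdot 2=a$ in $\mathcal S$ (integer multiples taken in the $\mathbb Z_2$-vector space $\mathcal S$).
   Context: $\mathcal S=\{0,1,2,3\}$ is the Klein four-group ($\mathbb Z_2$-vector space) with $x+x=0$, $1+2=3$, $1+3=2$, $2+3=1$; conjugation is the involution $\bar0=0,\bar1=1,\bar2=3,\bar3=2$. $\mathcal P_n$ is the power set of $\{1,\dots,n\}$ (addition = symmetric difference); $|U|_2=|U|\bmod2$; $J_M(U)=\{j:\sum_{i\in U}M_{ij}=1\}$; $r_i^S(M)=\sum_{j\in S}M_{ij}$. $(M,S)$ is a spin$^c$ pair if $|(J_M(U)+U)\cap S|_2=\binom{|U|}2\bmod 2$ for all $U\in\mathcal P_n$. A square matrix is distinguished if it has $1$ on the diagonal and $2$ or $3$ off it; self-conjugate if $A^t=\overline A$. A spin$^c$ pair $(M,S)$ is in standard form if: (i) $S=\{1,\dots,|S|\}$; (ii) the first row of $M$ is $[1,2,\dots,2]$; (iii) $M$ is distinguished with block form $\begin{bmatrix}A&2&*\\2&B&*\\ *&*&*\end{bmatrix}$ with diagonal blocks of degrees $k,l,r$ (the blocks marked $2$ have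 all entries $2$); (iv) $k\ge l$ and $k+l=|S|$; (v) $A,B$ are self-conjugate; (vi) $r_1^S(M)=\dots=r_k^S(M)\ne r_{k+1}^S(M)=\dots=r_{k+l}^S(M)$ (possibly $l=0$). *)

theory Defs
  imports Main
begin

datatype ks = S0 | S1 | S2 | S3

fun ks_add :: "ks \<Rightarrow> ks \<Rightarrow> ks" where
  "ks_add S0 y = y"
| "ks_add x S0 = x"
| "ks_add S1 S1 = S0" | "ks_add S1 S2 = S3" | "ks_add S1 S3 = S2"
| "ks_add S2 S1 = S3" | "ks_add S2 S2 = S0" | "ks_add S2 S3 = S1"
| "ks_add S3 S1 = S2" | "ks_add S3 S2 = S1" | "ks_add S3 S3 = S0"

instantiation ks :: ab_group_add
begin
definition "zero_ks = S0"
definition "plus_ks = ks_add"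
definition "uminus_ks = (\<lambda>x::ks. x)"
definition "minus_ks = ks_add"
instance
proof
  fix a b c :: ks
  show "a + b + c = a + (b + c)"
    unfolding plus_ks_def by (cases a; cases b; cases c) auto
  show "a + b = b + a"
    unfolding plus_ks_def by (cases a; cases b) auto
  show "0 + a = a"
    unfolding plus_ks_def zero_ks_def by simp
  show "- a + a = 0"
    unfolding plus_ks_def zero_ks_def uminus_ks_def by (cases a) auto
  show "a - b = a + - b"
    unfolding plus_ks_def minus_ks_def uminus_ks_def by simp
qed
end

fun ks_conj :: "ks \<Rightarrow> ks" where
  "ks_conj S0 = S0" | "ks_conj S1 = S1" | "ks_conj S2 = S3" | "ks_conj S3 = S2"

definition ks_zmult :: "int \<Rightarrow> ks \<Rightarrow> ks" where
  "ks_zmult z x = (if odd z then x else 0)"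

text \<open>Matrices over \<S> of degree n: functions nat \<Rightarrow> nat \<Rightarrow> ks, indices 1..n.\<close>

definition J_M :: "nat \<Rightarrow> (nat \<Rightarrow> nat \<Rightarrow> ks) \<Rightarrow> nat set \<Rightarrow> nat set" where
  "J_M n M U = {j \<in> {1..n}. (\<Sum>i\<in>U. M i j) = S1}"

definition row_sum :: "(nat \<Rightarrow> nat \<Rightarrow> ks) \<Rightarrow> nat set \<Rightarrow> nat \<Rightarrow> ks" where
  "row_sum M S i = (\<Sum>j\<in>S. M i j)"

definition spinc_pair :: "nat \<Rightarrow> (nat \<Rightarrow> nat \<Rightarrow> ks) \<Rightarrow> nat set \<Rightarrow> bool" where
  "spinc_pair n M S \<longleftrightarrow> S \<subseteq> {1..n} \<and>
     (\<forall>U. U \<subseteq> {1..n} \<longrightarrow>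
        card ((J_M n M U - U \<union> (U - J_M n M U)) \<inter> S) mod 2 = (card U choose 2) mod 2)"

definition distinguished :: "nat \<Rightarrow> (nat \<Rightarrow> nat \<Rightarrow> ks) \<Rightarrow> bool" where
  "distinguished n M \<longleftrightarrow> (\<forall>i\<in>{1..n}. M i i = S1) \<and>
     (\<forall>i\<in>{1..n}. \<forall>j\<in>{1..n}. i \<noteq> j \<longrightarrow> M i j \<in> {S2, S3})"

definition self_conj_block :: "(nat \<Rightarrow> nat \<Rightarrow> ks) \<Rightarrow> nat set \<Rightarrow> bool" where
  "self_conj_block M I \<longleftrightarrow> (\<forall>i\<in>I. \<forall>j\<in>I. M j i = ks_conj (M i j))"

definition standard_form ::
  "nat \<Rightarrow> (nat \<Rightarrow> nat \<Rightarrow> ks) \<Rightarrow> nat set \<Rightarrow> nat \<Rightarrow> nat \<Rightarrow> nat \<Rightarrow> bool" where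
  "standard_form n M S k l r \<longleftrightarrow>
     spinc_pair n M S \<and>
     n = k + l + r \<and>
     S = {1..card S} \<and>
     M 1 1 = S1 \<and> (\<forall>j\<in>{2..n}. M 1 j = S2) \<and>
     distinguished n M \<and>
     (\<forall>i\<in>{1..k}. \<forall>j\<in>{k+1..k+l}. M i j = S2 \<and> M j i = S2) \<and>
     k \<ge> l \<and> k + l = card S \<and>
     self_conj_block M {1..k} \<and> self_conj_block M {k+1..k+l} \<and>
     (\<forall>i\<in>{1..k}. row_sum M S i = row_sum M S 1) \<and>
     (\<forall>i\<in>{k+1..k+l}. row_sum M S i = row_sum M S (k+1)) \<and>
     (l > 0 \<longrightarrow> row_sum M S 1 \<noteq> row_sum M S (k+1))"

end

theory Submission
  imports Defs
begin

text \<open>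
  Since the off-diagonal entries lie in {2, 3}, these
  say that rows i and m of M disagree on an even number of columns of S - {i}, and that
  exactly one of the agreements M j i = M m i and M i j = M m j holds. Comparing row m with
  the first row [1, 2, ..., 2] then forces row m to be constant on the first block and
  conjugate-constant on the second; the parity statement turns into the identity in \<S>.
\<close>

lemma ks_add_eq_0_iff: "x + y = (0::ks) \<longleftrightarrow> x = y"
  by (cases x; cases y) (auto simp: plus_ks_def zero_ks_def)

lemma ks_add_eq_S1_iff:
  "x \<in> {S2, S3} \<Longrightarrow> y \<in> {S2, S3} \<Longrightarrow> x + y = S1 \<longleftrightarrow> x \<noteq> y"
  by (auto simp: plus_ks_def)

lemma ks_add3_neq_S1:
  "x \<in> {S2, S3} \<Longrightarrow> y \<in> {S2, S3} \<Longrightarrow> z \<in> {S2, S3} \<Longrightarrow> x + (y + z) \<noteq> S1"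
  by (auto simp: plus_ks_def)

definition spinc_defect :: "nat \<Rightarrow> (nat \<Rightarrow> nat \<Rightarrow> ks) \<Rightarrow> nat set \<Rightarrow> nat set \<Rightarrow> nat set" where
  "spinc_defect n M S U = (J_M n M U - U \<union> (U - J_M n M U)) \<inter> S"

lemma spinc_pair_card_defect:
  "spinc_pair n M S \<Longrightarrow> U \<subseteq> {1..n} \<Longrightarrow>
    card (spinc_defect n M S U) mod 2 = (card U choose 2) mod 2"
  unfolding spinc_pair_def spinc_defect_def by blast

lemma mem_spinc_defect_iff:
  "S \<subseteq> {1..n} \<Longrightarrow> t \<in> S \<Longrightarrow>
    t \<in> spinc_defect n M S U \<longleftrightarrow> ((\<Sum>x\<in>U. M x t) = S1 \<longleftrightarrow> t \<notin> U)"
  unfolding spinc_defect_def J_M_def by auto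

lemma distinguished_offdiag:
  "distinguished n M \<Longrightarrow> i \<in> {1..n} \<Longrightarrow> j \<in> {1..n} \<Longrightarrow> i \<noteq> j \<Longrightarrow> M i j \<in> {S2, S3}"
  unfolding distinguished_def by blast

lemma distinguished_diag: "distinguished n M \<Longrightarrow> i \<in> {1..n} \<Longrightarrow> M i i = S1"
  unfolding distinguished_def by blast

lemma spinc_pair_even_row_mismatches:
  assumes sp: "spinc_pair n M S" and d: "distinguished n M"
    and i: "i \<in> S" and m: "m \<in> {1..n}" "m \<notin> S"
  shows "even (card {t \<in> S - {i}. M i t \<noteq> M m t})"
proof -
  have Sn: "S \<subseteq> {1..n}" using sp unfolding spinc_pair_def by blast
  have "i \<noteq> m" "i \<in> {1..n}" using i m Sn by auto
  have defect: "spinc_defect n M S {i, m} = insert i {t \<in> S - {i}. M i t \<noteq> M m t}"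
  proof (rule set_eqI)
    fix t
    consider "t = i" | "t \<in> S" "t \<noteq> i" | "t \<notin> S"
      by blast
    then show "t \<in> spinc_defect n M S {i, m} \<longleftrightarrow> t \<in> insert i {t \<in> S - {i}. M i t \<noteq> M m t}"
    proof cases
      case 1
      then show ?thesis
        using mem_spinc_defect_iff[OF Sn i] distinguished_diag[OF d \<open>i \<in> {1..n}\<close>]
          distinguished_offdiag[OF d m(1) \<open>i \<in> {1..n}\<close>] add_cancel_right_right \<open>i \<noteq> m\<close>
        by (auto simp: zero_ks_def)
    next
      case 2
      then have "t \<noteq> m" "t \<in> {1..n}" using m Sn by auto
      then show ?thesis
        using 2 mem_spinc_defect_iff[OF Sn 2(1)] ks_add_eq_S1_iff \<open>i \<noteq> m\<close>
          distinguished_offdiag[OF d \<open>i \<in> {1..n}\<close>] distinguished_offdiag[OF d m(1)]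
        by auto
    qed (use i in \<open>auto simp: spinc_defect_def\<close>)
  qed
  have "card {i, m} choose 2 = 1"
    using \<open>i \<noteq> m\<close> by (simp add: numeral_eq_Suc)
  then have "odd (card (spinc_defect n M S {i, m}))"
    using spinc_pair_card_defect[OF sp, of "{i, m}"] \<open>i \<in> {1..n}\<close> m
    by (simp add: odd_iff_mod_2_eq_one)
  then show ?thesis
    unfolding defect using finite_subset[OF Sn] by simp
qed

lemma spinc_pair_column_agreement_xor:
  assumes sp: "spinc_pair n M S" and d: "distinguished n M"
    and i: "i \<in> S" and j: "j \<in> S" and ij: "i \<noteq> j" and m: "m \<in> {1..n}" "m \<notin> S"
  shows "M j i = M m i \<longleftrightarrow> M i j \<noteq> M m j"
proof -
  have Sn: "S \<subseteq> {1..n}" using sp unfolding spinc_pair_def by blast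
  have ne: "i \<noteq> m" "j \<noteq> m" and ij_n: "i \<in> {1..n}" "j \<in> {1..n}" using i j m Sn by auto
  let ?U = "{i, j, m}"
  have sum: "(\<Sum>x\<in>?U. M x t) = M i t + (M j t + M m t)" for t
    using ij ne by simp
  have defect: "spinc_defect n M S ?U =
      (if M j i \<noteq> M m i then {i} else {}) \<union> (if M i j \<noteq> M m j then {j} else {})"
  proof (rule set_eqI)
    fix t
    consider "t = i" | "t = j" | "t \<in> S" "t \<notin> ?U" | "t \<notin> S"
      using m by blast
    then show "t \<in> spinc_defect n M S ?U \<longleftrightarrow>
        t \<in> (if M j i \<noteq> M m i then {i} else {}) \<union> (if M i j \<noteq> M m j then {j} else {})"
    proof cases
      case 1
      then show ?thesis
        using mem_spinc_defect_iff[OF Sn i] sum distinguished_diag[OF d] add_cancel_right_right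
          ks_add_eq_0_iff ij_n ij
        by (simp add: add.assoc)
    next
      case 2
      have "M i j + (S1 + M m j) = S1 + (M i j + M m j)"
        by (simp add: add.left_commute)
      then show ?thesis
        using 2 mem_spinc_defect_iff[OF Sn j] sum distinguished_diag[OF d] add_cancel_right_right
          ks_add_eq_0_iff ij_n ij
        by simp
    next
      case 3
      then show ?thesis
        using mem_spinc_defect_iff[OF Sn 3(1)] sum ks_add3_neq_S1 distinguished_offdiag[OF d]
          ij_n m Sn
        by auto
    qed (use i j in \<open>auto simp: spinc_defect_def\<close>)
  qed
  have "card ?U choose 2 = 3"
    using ij ne by (simp add: numeral_eq_Suc)
  then have "card (spinc_defect n M S ?U) mod 2 = 1"
    using spinc_pair_card_defect[OF sp, of ?U] ij_n m by simp
  then show ?thesis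
    unfolding defect using i j ij by (auto split: if_splits)
qed

lemma standard_form_row_blocks:
  assumes sf: "standard_form n M S k l r" and m: "k + l < m" "m \<le> n" and "0 < k"
  shows "M m 1 \<in> {S2, S3} \<and> (\<forall>j\<in>{1..k}. M m j = M m 1) \<and>
    (\<forall>j\<in>{k+1..k+l}. M m j = ks_conj (M m 1))"
proof -
  have sp: "spinc_pair n M S" and d: "distinguished n M" and S: "S = {1..k+l}"
    and first_row: "\<forall>j\<in>{2..n}. M 1 j = S2"
    and off_block: "\<forall>i\<in>{1..k}. \<forall>j\<in>{k+1..k+l}. M i j = S2 \<and> M j i = S2"
    and conj: "self_conj_block M {1..k}" and "n = k + l + r"
    using sf unfolding standard_form_def by auto
  have mS: "m \<in> {1..n}" "m \<notin> S" and one: "1 \<in> S"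
    using S m \<open>0 < k\<close> by auto
  have row_m: "M m j \<in> {S2, S3}" if "j \<in> S" for j
    using distinguished_offdiag[OF d mS(1), of j] that mS S \<open>n = k + l + r\<close> by auto
  have first_row_on_S: "M 1 j = S2" if "j \<in> S" "j \<noteq> 1" for j
    using first_row that S \<open>n = k + l + r\<close> by auto
  have agree: "M j 1 = M m 1 \<longleftrightarrow> M m j \<noteq> S2" if "j \<in> S" "j \<noteq> 1" for j
    using spinc_pair_column_agreement_xor[OF sp d one(1) that(1) that(2)[symmetric] mS]
      first_row_on_S[OF that] by auto
  have "M m j = M m 1" if "j \<in> {1..k}" for j
  proof (cases "j = 1")
    case False
    have jS: "j \<in> S" using that S by auto
    have "1 \<in> {1..k}" using \<open>0 < k\<close> by simp
    then have "M j 1 = ks_conj (M 1 j)"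
      using conj that unfolding self_conj_block_def by blast
    then have "M j 1 = S3"
      using first_row_on_S[OF jS False] by simp
    then show ?thesis
      using agree[OF jS False] row_m[OF jS] row_m[OF one(1)] by auto
  qed simp
  moreover have "M m j = ks_conj (M m 1)" if "j \<in> {k+1..k+l}" for j
  proof -
    have jS: "j \<in> S" "j \<noteq> 1" using that S \<open>0 < k\<close> by auto
    have "M j 1 = S2"
      using off_block that \<open>0 < k\<close> by simp
    then show ?thesis
      using agree[OF jS] row_m[OF jS(1)] row_m[OF one(1)] by auto
  qed
  ultimately show ?thesis
    using row_m[OF one(1)] by blast
qed

lemma standard_form_row_parity:
  assumes sf: "standard_form n M S k l r" and m: "k + l < m" "m \<le> n" and "0 < k"
  shows "if M m 1 = S2 then even l else odd k"
proof -
  have sp: "spinc_pair n M S" and d: "distinguished n M" and S: "S = {1..k+l}"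
    and first_row: "\<forall>j\<in>{2..n}. M 1 j = S2" and "n = k + l + r"
    using sf unfolding standard_form_def by auto
  define a where "a = M m 1"
  have a: "a \<in> {S2, S3}" and first: "\<forall>j\<in>{1..k}. M m j = a"
    and second: "\<forall>j\<in>{k+1..k+l}. M m j = ks_conj a"
    using standard_form_row_blocks[OF sf m \<open>0 < k\<close>] unfolding a_def by blast+
  have "{t \<in> S - {1}. M 1 t \<noteq> M m t} = (if a = S2 then {k+1..k+l} else {2..k})"
  proof (rule set_eqI)
    fix t
    show "t \<in> {t \<in> S - {1}. M 1 t \<noteq> M m t} \<longleftrightarrow> t \<in> (if a = S2 then {k+1..k+l} else {2..k})"
    proof (cases "t \<in> S - {1}")
      case True
      then have "M 1 t = S2" using first_row S \<open>n = k + l + r\<close> by auto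
      then show ?thesis
        using True a first second S by (cases "t \<le> k") auto
    qed (use S \<open>0 < k\<close> in auto)
  qed
  moreover have "even (card {t \<in> S - {1}. M 1 t \<noteq> M m t})"
    using spinc_pair_even_row_mismatches[OF sp d] S m \<open>0 < k\<close> \<open>n = k + l + r\<close> by auto
  ultimately show ?thesis
    using \<open>0 < k\<close> unfolding a_def by (auto split: if_splits)
qed

lemma ks_block_identity:
  assumes "a \<in> {S2, S3}" and "if a = S2 then even l else odd k"
  shows "ks_zmult (int k) a + ks_zmult (int l) (ks_conj a) + ks_zmult (int k - int l - 1) S2 = a"
  using assms by (auto simp: ks_zmult_def plus_ks_def zero_ks_def)

theorem mainTheorem13:
  fixes n k l r m :: nat and M :: "nat \<Rightarrow> nat \<Rightarrow> ks" and S :: "nat set"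
  assumes "standard_form n M S k l r"
    and "k + l < m" and "m \<le> n"
  shows "\<exists>a\<in>{S2, S3}.
           (\<forall>j\<in>{1..k}. M m j = a) \<and>
           (\<forall>j\<in>{k+1..k+l}. M m j = ks_conj a) \<and>
           ks_zmult (int k) a + ks_zmult (int l) (ks_conj a)
             + ks_zmult (int k - int l - 1) S2 = a"
proof (cases "k = 0")
  case True
  then have "l = 0"
    using assms(1) unfolding standard_form_def by simp
  then show ?thesis
    using True ks_block_identity[of S2 0 0] by auto
next
  case False
  then show ?thesis
    using standard_form_row_blocks[OF assms] standard_form_row_parity[OF assms]
      ks_block_identity[of "M m 1" l k] by blast
qed

end
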